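(* Let $P(X)=\sum_{i=0}^d a_iX^i$ be a polynomial with coefficients $a_i$ in $\mathbb{D}$, and let $A,B\in\mathbb{D}$ with $P(A)=P(B)$. Then $A=B$ provided either $a_1\in\mathbb{D}^*$, or there exists $i>1$ with $a_i\in\mathbb{D}^*$ and $A\in\mathbb{D}^*$.
   Context: $\mathbb{D}$ is the set of finite dynamical systems (FDSs), i.e. functions $A:S_A\to S_A$ on finite sets, considered up to isomorphism of functional graphs. The sum $A+B$ acts on the disjoint union $S_A\sqcup S_B$ as $A$ on $S_A$ and $B$ on $S_B$; the product $AB$ acts on $S_A\times S_B$ by $(a,b)\mapsto(A(a),B(b))$. $X^i$ denotes the $i$-fold product, $X^0$ is the one-state FDS with a fixpoint, and $P(A)=\sum_i a_iA^i$ is evaluated with these operations. $\mathbb{D}^*$ is the set of FDSs having a fixpoint (a state $s$ with $A(s)=s$). *)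

theory Defs
  imports Main "HOL-Library.Nat_Bijection"
begin

text \<open>A finite dynamical system (FDS) is represented by a finite carrier set of
states (encoded as natural numbers; every finite set is in bijection with a finite
set of naturals) together with a map that sends the carrier into itself.
Values of the map outside the carrier are irrelevant.\<close>

type_synonym fds = "nat set \<times> (nat \<Rightarrow> nat)"

definition is_fds :: "fds \<Rightarrow> bool" where
  "is_fds A \<longleftrightarrow> finite (fst A) \<and> (\<forall>x\<in>fst A. snd A x \<in> fst A)"

definition fds_iso :: "fds \<Rightarrow> fds \<Rightarrow> bool" where
  "fds_iso A B \<longleftrightarrow> (\<exists>h. bij_betw h (fst A) (fst B) \<and>
                       (\<forall>x\<in>fst A. h (snd A x) = snd B (h x)))"

text \<open>Sum: disjoint union (left copy on even codes, right copy on odd codes).\<close>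
definition fds_sum :: "fds \<Rightarrow> fds \<Rightarrow> fds" where
  "fds_sum A B = ((\<lambda>x. 2 * x) ` fst A \<union> (\<lambda>x. 2 * x + 1) ` fst B,
     (\<lambda>n. if even n then 2 * snd A (n div 2) else 2 * snd B (n div 2) + 1))"

definition fds_prod :: "fds \<Rightarrow> fds \<Rightarrow> fds" where
  "fds_prod A B = (prod_encode ` (fst A \<times> fst B),
     (\<lambda>n. case prod_decode n of (a, b) \<Rightarrow> prod_encode (snd A a, snd B b)))"

definition fds_one :: fds where "fds_one = ({0}, \<lambda>_. 0)"
definition fds_zero :: fds where "fds_zero = ({}, \<lambda>x. x)"

primrec fds_pow :: "fds \<Rightarrow> nat \<Rightarrow> fds" where
  "fds_pow A 0 = fds_one"
| "fds_pow A (Suc n) = fds_prod A (fds_pow A n)"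

text \<open>Polynomial with coefficient list [a_0, a_1, ..., a_d]:
  peval_from i as X = sum over k of (as ! k) * X^(i+k).\<close>
primrec peval_from :: "nat \<Rightarrow> fds list \<Rightarrow> fds \<Rightarrow> fds" where
  "peval_from i [] X = fds_zero"
| "peval_from i (a # as) X = fds_sum (fds_prod a (fds_pow X i)) (peval_from (Suc i) as X)"

definition peval :: "fds list \<Rightarrow> fds \<Rightarrow> fds" where
  "peval as X = peval_from 0 as X"

text \<open>Membership in D*: having a fixpoint.\<close>
definition has_fixpoint :: "fds \<Rightarrow> bool" where
  "has_fixpoint A \<longleftrightarrow> (\<exists>s\<in>fst A. snd A s = s)"

end

theory Submission
  imports Defs "HOL-Library.FuncSet"
begin

text \<open>The proof counts homomorphisms. For a connected FDS C the number |Hom(C,X)| of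
homomorphisms C \<rightarrow> X is additive under sum and multiplicative under product of X, so
P(A) \<cong> P(B) gives p(|Hom(C,A)|) = p(|Hom(C,B)|) for the polynomial p over the naturals with
coefficients |Hom(C,a_i)|. A coefficient a_k with k \<ge> 1 that has a fixpoint makes
|Hom(C,a_k)| positive, hence p strictly increasing, so |Hom(C,A)| = |Hom(C,B)|. Hom-counts are multiplicative over the
components of C, so they agree for every C, and Lovasz's argument concludes: Moebius
inversion over the sets of identified pairs shows that A and B have equally many injective
homomorphisms from every C, and C = A, C = B give injections both ways.\<close>

lemma is_fds_sum: "is_fds X \<Longrightarrow> is_fds Y \<Longrightarrow> is_fds (fds_sum X Y)"
  unfolding is_fds_def fds_sum_def by auto

lemma is_fds_prod: "is_fds X \<Longrightarrow> is_fds Y \<Longrightarrow> is_fds (fds_prod X Y)"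
  unfolding is_fds_def fds_prod_def by auto

lemma is_fds_one: "is_fds fds_one"
  unfolding is_fds_def fds_one_def by auto

lemma is_fds_zero: "is_fds fds_zero"
  unfolding is_fds_def fds_zero_def by auto

lemma is_fds_pow: "is_fds X \<Longrightarrow> is_fds (fds_pow X n)"
  by (induction n) (auto intro: is_fds_prod is_fds_one)

lemma is_fds_peval_from: "\<forall>a\<in>set as. is_fds a \<Longrightarrow> is_fds X \<Longrightarrow> is_fds (peval_from i as X)"
  by (induction as arbitrary: i) (auto intro: is_fds_sum is_fds_prod is_fds_pow is_fds_zero)

lemma is_fdsD: "is_fds C \<Longrightarrow> x \<in> fst C \<Longrightarrow> snd C x \<in> fst C"
  unfolding is_fds_def by blast

section \<open>Homomorphism counts\<close>

definition fds_hom :: "fds \<Rightarrow> fds \<Rightarrow> (nat \<Rightarrow> nat) set" where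
  "fds_hom C X = {h \<in> fst C \<rightarrow>\<^sub>E fst X. \<forall>x\<in>fst C. h (snd C x) = snd X (h x)}"

lemma fds_homD:
  assumes "h \<in> fds_hom C X"
  shows "\<And>x. x \<in> fst C \<Longrightarrow> h x \<in> fst X" "\<And>x. x \<in> fst C \<Longrightarrow> h (snd C x) = snd X (h x)"
    "h \<in> extensional (fst C)"
  using assms unfolding fds_hom_def by (auto simp: PiE_def)

lemma finite_fds_hom: "is_fds C \<Longrightarrow> is_fds X \<Longrightarrow> finite (fds_hom C X)"
  unfolding fds_hom_def is_fds_def
  by (rule finite_subset[of _ "fst C \<rightarrow>\<^sub>E fst X"]) (auto intro: finite_PiE)

lemma fds_iso_sym:
  assumes "is_fds Y" "fds_iso Y Z"
  shows "fds_iso Z Y"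
proof -
  obtain h where h: "bij_betw h (fst Y) (fst Z)" "\<forall>x\<in>fst Y. h (snd Y x) = snd Z (h x)"
    using assms(2) unfolding fds_iso_def by blast
  let ?g = "inv_into (fst Y) h"
  have "bij_betw ?g (fst Z) (fst Y)"
    using h(1) by (rule bij_betw_inv_into)
  moreover have "?g (snd Z z) = snd Y (?g z)" if z: "z \<in> fst Z" for z
  proof -
    obtain y where y: "y \<in> fst Y" "z = h y"
      using h(1) z by (auto simp: bij_betw_def)
    then show ?thesis
      using is_fdsD[OF assms(1) y(1)] h by (metis bij_betw_inv_into_left)
  qed
  ultimately show ?thesis
    unfolding fds_iso_def by blast
qed

lemma card_fds_hom_le_if_iso:
  assumes "fds_iso Y Z" "is_fds C" "is_fds Z"
  shows "card (fds_hom C Y) \<le> card (fds_hom C Z)"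
proof -
  obtain h where h: "bij_betw h (fst Y) (fst Z)" "\<forall>x\<in>fst Y. h (snd Y x) = snd Z (h x)"
    using assms(1) unfolding fds_iso_def by blast
  let ?F = "\<lambda>k. restrict (h \<circ> k) (fst C)"
  have "inj_on ?F (fds_hom C Y)"
  proof (rule inj_onI)
    fix k1 k2 assume k: "k1 \<in> fds_hom C Y" "k2 \<in> fds_hom C Y" "?F k1 = ?F k2"
    show "k1 = k2"
    proof (rule extensionalityI[OF fds_homD(3)[OF k(1)] fds_homD(3)[OF k(2)]])
      fix x assume x: "x \<in> fst C"
      then have "h (k1 x) = h (k2 x)"
        using fun_cong[OF k(3), of x] by auto
      then show "k1 x = k2 x"
        using h(1) fds_homD(1)[OF k(1) x] fds_homD(1)[OF k(2) x] by (auto simp: bij_betw_def inj_on_def)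
    qed
  qed
  moreover have "?F ` fds_hom C Y \<subseteq> fds_hom C Z"
    using h is_fdsD[OF assms(2)] unfolding fds_hom_def bij_betw_def by (auto simp: PiE_def Pi_def)
  ultimately show ?thesis
    using card_inj_on_le finite_fds_hom[OF assms(2,3)] by metis
qed

lemma card_fds_hom_iso:
  assumes "fds_iso Y Z" "is_fds Y" "is_fds Z" "is_fds C"
  shows "card (fds_hom C Y) = card (fds_hom C Z)"
  using card_fds_hom_le_if_iso[OF assms(1,4,3)] card_fds_hom_le_if_iso[OF fds_iso_sym[OF assms(2,1)] assms(4,2)]
  by (rule antisym)

lemma card_fds_hom_prod:
  assumes C: "is_fds C"
  shows "card (fds_hom C (fds_prod X Y)) = card (fds_hom C X) * card (fds_hom C Y)"
proof -
  let ?F = "\<lambda>h. (restrict (\<lambda>x. fst (prod_decode (h x))) (fst C),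
                 restrict (\<lambda>x. snd (prod_decode (h x))) (fst C))"
  let ?G = "\<lambda>(k1, k2). restrict (\<lambda>x. prod_encode (k1 x, k2 x)) (fst C)"
  have "bij_betw ?F (fds_hom C (fds_prod X Y)) (fds_hom C X \<times> fds_hom C Y)"
  proof (rule bij_betw_byWitness[where f'="?G"])
    show "\<forall>h\<in>fds_hom C (fds_prod X Y). ?G (?F h) = h"
      by (auto intro!: extensionalityI[OF _ fds_homD(3)])
    show "\<forall>k\<in>fds_hom C X \<times> fds_hom C Y. ?F (?G k) = k"
      by (auto intro!: extensionalityI[OF _ fds_homD(3)])
    show "?F ` fds_hom C (fds_prod X Y) \<subseteq> fds_hom C X \<times> fds_hom C Y"
    proof
      fix p assume "p \<in> ?F ` fds_hom C (fds_prod X Y)"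
      then obtain h where h: "h \<in> fds_hom C (fds_prod X Y)" "p = ?F h" by blast
      have "fst (prod_decode (h x)) \<in> fst X \<and> snd (prod_decode (h x)) \<in> fst Y" if "x \<in> fst C" for x
        using fds_homD(1)[OF h(1) that] unfolding fds_prod_def by auto
      moreover have "h (snd C x) = prod_encode (snd X (fst (prod_decode (h x))), snd Y (snd (prod_decode (h x))))"
        if "x \<in> fst C" for x
        using fds_homD(2)[OF h(1) that] unfolding fds_prod_def by (simp split: prod.splits)
      ultimately show "p \<in> fds_hom C X \<times> fds_hom C Y"
        unfolding h(2) fds_hom_def using is_fdsD[OF C] by (auto simp: PiE_def Pi_def)
    qed
    show "?G ` (fds_hom C X \<times> fds_hom C Y) \<subseteq> fds_hom C (fds_prod X Y)"
      using is_fdsD[OF C] unfolding fds_hom_def fds_prod_def by (auto simp: PiE_def Pi_def)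
  qed
  then show ?thesis
    by (simp add: bij_betw_same_card card_cartesian_product)
qed

lemma card_fds_hom_one: "is_fds C \<Longrightarrow> card (fds_hom C fds_one) = 1"
proof -
  assume "is_fds C"
  then have "fds_hom C fds_one = {restrict (\<lambda>_. 0) (fst C)}"
    unfolding fds_hom_def fds_one_def is_fds_def by (auto simp: PiE_def Pi_def extensional_def)
  then show ?thesis by simp
qed

lemma card_fds_hom_pow: "is_fds C \<Longrightarrow> card (fds_hom C (fds_pow X n)) = card (fds_hom C X) ^ n"
  by (induction n) (auto simp: card_fds_hom_one card_fds_hom_prod)

lemma fds_hom_zero: "fst C \<noteq> {} \<Longrightarrow> fds_hom C fds_zero = {}"
  unfolding fds_hom_def fds_zero_def by auto

lemma fds_hom_empty: "fst C = {} \<Longrightarrow> fds_hom C X = {\<lambda>_. undefined}"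
  unfolding fds_hom_def by simp

definition fds_invariant :: "fds \<Rightarrow> nat set \<Rightarrow> bool" where
  "fds_invariant C S \<longleftrightarrow> S \<subseteq> fst C \<and> (\<forall>x\<in>S. snd C x \<in> S)"

definition fds_connected :: "fds \<Rightarrow> bool" where
  "fds_connected C \<longleftrightarrow> fst C \<noteq> {} \<and> (\<forall>S. fds_invariant C S \<longrightarrow> fds_invariant C (fst C - S)
      \<longrightarrow> S = {} \<or> S = fst C)"

lemma card_fds_hom_into_embedded:
  assumes C: "is_fds C" and d: "\<And>y. d (e y) = y"
    and e: "e ` fst X \<subseteq> fst Z" "\<And>y. y \<in> fst X \<Longrightarrow> snd Z (e y) = e (snd X y)"
  shows "card {h \<in> fds_hom C Z. \<forall>x\<in>fst C. h x \<in> e ` fst X} = card (fds_hom C X)"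
proof -
  let ?F = "\<lambda>h. restrict (d \<circ> h) (fst C)"
  let ?G = "\<lambda>k. restrict (e \<circ> k) (fst C)"
  have "bij_betw ?F {h \<in> fds_hom C Z. \<forall>x\<in>fst C. h x \<in> e ` fst X} (fds_hom C X)"
  proof (rule bij_betw_byWitness[where f'="?G"])
    show "\<forall>h\<in>{h \<in> fds_hom C Z. \<forall>x\<in>fst C. h x \<in> e ` fst X}. ?G (?F h) = h"
      using d by (fastforce intro!: extensionalityI[OF _ fds_homD(3)])
    show "\<forall>k\<in>fds_hom C X. ?F (?G k) = k"
      using d by (auto intro!: extensionalityI[OF _ fds_homD(3)])
    show "?F ` {h \<in> fds_hom C Z. \<forall>x\<in>fst C. h x \<in> e ` fst X} \<subseteq> fds_hom C X"
    proof
      fix k assume "k \<in> ?F ` {h \<in> fds_hom C Z. \<forall>x\<in>fst C. h x \<in> e ` fst X}"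
      then obtain h where h: "h \<in> fds_hom C Z" "\<forall>x\<in>fst C. h x \<in> e ` fst X" "k = ?F h"
        by blast
      have "d (h (snd C x)) = snd X (d (h x))" if "x \<in> fst C" for x
        using h(2) fds_homD(2)[OF h(1) that] e(2) d that by fastforce
      then show "k \<in> fds_hom C X"
        using h(2,3) d is_fdsD[OF C] unfolding fds_hom_def by auto
    qed
    show "?G ` fds_hom C X \<subseteq> {h \<in> fds_hom C Z. \<forall>x\<in>fst C. h x \<in> e ` fst X}"
      using e is_fdsD[OF C] unfolding fds_hom_def by (auto simp: PiE_def Pi_def)
  qed
  then show ?thesis
    by (rule bij_betw_same_card)
qed

lemma card_fds_hom_sum:
  assumes C: "is_fds C" and conn: "fds_connected C" and X: "is_fds X" and Y: "is_fds Y"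
  shows "card (fds_hom C (fds_sum X Y)) = card (fds_hom C X) + card (fds_hom C Y)"
proof -
  let ?H = "fds_hom C (fds_sum X Y)"
  let ?L = "{h \<in> ?H. \<forall>x\<in>fst C. h x \<in> (\<lambda>y. 2 * y) ` fst X}"
  let ?R = "{h \<in> ?H. \<forall>x\<in>fst C. h x \<in> (\<lambda>y. 2 * y + 1) ` fst Y}"
  have "?H = ?L \<union> ?R"
  proof (intro equalityI subsetI)
    fix h assume h: "h \<in> ?H"
    let ?S = "{x \<in> fst C. even (h x)}"
    have parity: "even (h (snd C x)) \<longleftrightarrow> even (h x)" if "x \<in> fst C" for x
      using fds_homD(2)[OF h that] unfolding fds_sum_def by simp
    have "fds_invariant C ?S" "fds_invariant C (fst C - ?S)"
      using parity is_fdsD[OF C] unfolding fds_invariant_def by auto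
    then consider "\<forall>x\<in>fst C. even (h x)" | "\<forall>x\<in>fst C. odd (h x)"
      using conn unfolding fds_connected_def by blast
    moreover have "(even (h x) \<longrightarrow> h x \<in> (\<lambda>y. 2 * y) ` fst X)
        \<and> (odd (h x) \<longrightarrow> h x \<in> (\<lambda>y. 2 * y + 1) ` fst Y)" if "x \<in> fst C" for x
      using fds_homD(1)[OF h that] unfolding fds_sum_def by auto
    ultimately show "h \<in> ?L \<union> ?R"
      using h by cases blast+
  qed auto
  moreover have "?L \<inter> ?R = {}"
  proof -
    obtain x where "x \<in> fst C"
      using conn unfolding fds_connected_def by blast
    moreover have "n \<notin> (\<lambda>y. 2 * y) ` fst X \<inter> (\<lambda>y. 2 * y + 1) ` fst Y" for n :: nat
      using double_not_eq_Suc_double by auto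
    ultimately show ?thesis
      by blast
  qed
  moreover have "card ?L = card (fds_hom C X)"
    by (rule card_fds_hom_into_embedded[OF C, where d = "\<lambda>n. n div 2"]) (auto simp: fds_sum_def)
  moreover have "card ?R = card (fds_hom C Y)"
    by (rule card_fds_hom_into_embedded[OF C, where d = "\<lambda>n. n div 2"]) (auto simp: fds_sum_def)
  moreover have "finite ?H"
    using finite_fds_hom[OF C is_fds_sum[OF X Y]] .
  ultimately show ?thesis
    using card_Un_disjoint[of ?L ?R] by simp
qed

primrec nat_poly_from :: "nat \<Rightarrow> nat list \<Rightarrow> nat \<Rightarrow> nat" where
  "nat_poly_from i [] t = 0"
| "nat_poly_from i (c # cs) t = c * t ^ i + nat_poly_from (Suc i) cs t"

lemma nat_poly_from_mono: "t \<le> t' \<Longrightarrow> nat_poly_from i cs t \<le> nat_poly_from i cs t'"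
  by (induction cs arbitrary: i) (auto intro!: add_mono mult_left_mono power_mono)

lemma nat_poly_from_strict_mono:
  "t < t' \<Longrightarrow> k < length cs \<Longrightarrow> 0 < cs ! k \<Longrightarrow> 1 \<le> i + k
    \<Longrightarrow> nat_poly_from i cs t < nat_poly_from i cs t'"
proof (induction cs arbitrary: i k)
  case Nil
  then show ?case by simp
next
  case (Cons c cs)
  show ?case
  proof (cases k)
    case 0
    then have "c * t ^ i < c * t' ^ i"
      using Cons.prems by (simp add: power_strict_mono)
    then show ?thesis
      using nat_poly_from_mono[OF less_imp_le[OF Cons.prems(1)]] by (simp add: add_less_le_mono)
  next
    case (Suc k')
    then have "nat_poly_from (Suc i) cs t < nat_poly_from (Suc i) cs t'"
      using Cons.prems by (intro Cons.IH) auto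
    moreover have "c * t ^ i \<le> c * t' ^ i"
      using Cons.prems(1) by (simp add: power_mono)
    ultimately show ?thesis
      by (simp add: add_le_less_mono)
  qed
qed

lemma nat_poly_from_inj:
  assumes "nat_poly_from i cs t = nat_poly_from i cs t'" "k < length cs" "0 < cs ! k" "1 \<le> i + k"
  shows "t = t'"
  using nat_poly_from_strict_mono[of t t' k cs i] nat_poly_from_strict_mono[of t' t k cs i] assms
  by (metis less_irrefl linorder_neqE_nat)

lemma card_fds_hom_peval_from:
  assumes C: "is_fds C" "fds_connected C" and as: "\<forall>a\<in>set as. is_fds a" and X: "is_fds X"
  shows "card (fds_hom C (peval_from i as X))
    = nat_poly_from i (map (\<lambda>a. card (fds_hom C a)) as) (card (fds_hom C X))"
  using as
proof (induction as arbitrary: i)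
  case Nil
  then show ?case
    using C(2) by (simp add: fds_hom_zero fds_connected_def)
next
  case (Cons a as)
  then show ?case
    using C X by (simp add: card_fds_hom_sum card_fds_hom_prod card_fds_hom_pow
        is_fds_prod is_fds_pow is_fds_peval_from)
qed

lemma card_fds_hom_pos_if_fixpoint:
  assumes "has_fixpoint X" "is_fds X" "is_fds C"
  shows "0 < card (fds_hom C X)"
proof -
  obtain s where s: "s \<in> fst X" "snd X s = s"
    using assms(1) unfolding has_fixpoint_def by blast
  then have "restrict (\<lambda>_. s) (fst C) \<in> fds_hom C X"
    using is_fdsD[OF assms(3)] unfolding fds_hom_def by auto
  then show ?thesis
    using finite_fds_hom[OF assms(3,2)] card_gt_0_iff by blast
qed

lemma card_fds_hom_eq_if_peval_iso:
  assumes as: "\<forall>a\<in>set as. is_fds a" and A: "is_fds A" and B: "is_fds B"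
    and iso: "fds_iso (peval as A) (peval as B)"
    and k: "1 \<le> k" "k < length as" "has_fixpoint (as ! k)"
    and C: "is_fds C" "fds_connected C"
  shows "card (fds_hom C A) = card (fds_hom C B)"
proof -
  have "nat_poly_from 0 (map (\<lambda>a. card (fds_hom C a)) as) (card (fds_hom C A))
      = nat_poly_from 0 (map (\<lambda>a. card (fds_hom C a)) as) (card (fds_hom C B))"
    using card_fds_hom_iso[OF iso _ _ C(1)] card_fds_hom_peval_from[OF C as] as A B
    unfolding peval_def by (simp add: is_fds_peval_from)
  moreover have "0 < map (\<lambda>a. card (fds_hom C a)) as ! k"
    using card_fds_hom_pos_if_fixpoint[OF k(3) _ C(1)] as k(2) by simp
  ultimately show ?thesis
    using nat_poly_from_inj k(1,2) by simp
qed

lemma card_fds_hom_split: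
  assumes C: "is_fds C" and S: "fds_invariant C S" "fds_invariant C (fst C - S)"
  shows "card (fds_hom C X) = card (fds_hom (S, snd C) X) * card (fds_hom (fst C - S, snd C) X)"
proof -
  let ?F = "\<lambda>h. (restrict h S, restrict h (fst C - S))"
  let ?G = "\<lambda>(k1, k2) x. if x \<in> S then k1 x else k2 x"
  have S_sub: "S \<subseteq> fst C"
    using S(1) unfolding fds_invariant_def by blast
  have "bij_betw ?F (fds_hom C X) (fds_hom (S, snd C) X \<times> fds_hom (fst C - S, snd C) X)"
  proof (rule bij_betw_byWitness[where f'="?G"])
    show "\<forall>h\<in>fds_hom C X. ?G (?F h) = h"
      using S_sub by (auto dest!: fds_homD(3) simp: extensional_def)
    show "\<forall>k\<in>fds_hom (S, snd C) X \<times> fds_hom (fst C - S, snd C) X. ?F (?G k) = k"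
    proof
      fix k assume "k \<in> fds_hom (S, snd C) X \<times> fds_hom (fst C - S, snd C) X"
      then obtain k1 k2 where "k = (k1, k2)" "k1 \<in> extensional S" "k2 \<in> extensional (fst C - S)"
        using fds_homD(3) by fastforce
      then show "?F (?G k) = k"
        by (auto simp: fun_eq_iff extensional_def)
    qed
    show "?F ` fds_hom C X \<subseteq> fds_hom (S, snd C) X \<times> fds_hom (fst C - S, snd C) X"
      using S unfolding fds_hom_def fds_invariant_def by (auto simp: PiE_def Pi_def)
    show "?G ` (fds_hom (S, snd C) X \<times> fds_hom (fst C - S, snd C) X) \<subseteq> fds_hom C X"
      using S S_sub unfolding fds_hom_def fds_invariant_def
      by (fastforce simp: PiE_def Pi_def extensional_def)
  qed
  then show ?thesis
    by (simp add: bij_betw_same_card card_cartesian_product)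
qed

lemma card_fds_hom_eq_if_connected_eq:
  assumes conn_eq: "\<And>C. is_fds C \<Longrightarrow> fds_connected C \<Longrightarrow> card (fds_hom C A) = card (fds_hom C B)"
  shows "is_fds C \<Longrightarrow> card (fds_hom C A) = card (fds_hom C B)"
proof (induction "card (fst C)" arbitrary: C rule: less_induct)
  case less
  consider "fst C = {}" | "fds_connected C"
    | S where "fds_invariant C S" "fds_invariant C (fst C - S)" "S \<noteq> {}" "S \<noteq> fst C"
    unfolding fds_connected_def by blast
  then show ?case
  proof cases
    case 3
    have fin: "finite (fst C)"
      using less.prems unfolding is_fds_def by blast
    have S_sub: "S \<subseteq> fst C"
      using 3(1) unfolding fds_invariant_def by blast
    have "is_fds (S, snd C)" "is_fds (fst C - S, snd C)"
      using 3 fin unfolding is_fds_def fds_invariant_def by (auto intro: finite_subset)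
    moreover have "card S < card (fst C)" "card (fst C - S) < card (fst C)"
      using 3 S_sub fin by (auto intro!: psubset_card_mono)
    ultimately show ?thesis
      using card_fds_hom_split[OF less.prems 3(1,2)] less.hyps by simp
  qed (simp_all add: fds_hom_empty conn_eq less.prems)
qed

section \<open>Lovasz's theorem\<close>

definition hom_kernel :: "fds \<Rightarrow> (nat \<Rightarrow> nat) \<Rightarrow> (nat \<times> nat) set" where
  "hom_kernel C h = {(x, y). x \<in> fst C \<and> y \<in> fst C \<and> h x = h y}"

definition fds_congruence :: "fds \<Rightarrow> (nat \<times> nat) set \<Rightarrow> bool" where
  "fds_congruence C R \<longleftrightarrow> equiv (fst C) R \<and> (\<forall>(x, y)\<in>R. (snd C x, snd C y) \<in> R)"

definition congruence_closure :: "fds \<Rightarrow> (nat \<times> nat) set \<Rightarrow> (nat \<times> nat) set" where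
  "congruence_closure C T = \<Inter>{R. fds_congruence C R \<and> T \<subseteq> R}"

text \<open>The states of the quotient are the least elements of the classes, so that it is again an
FDS on natural numbers.\<close>

definition class_rep :: "(nat \<times> nat) set \<Rightarrow> nat \<Rightarrow> nat" where
  "class_rep R x = (LEAST y. (x, y) \<in> R)"

definition fds_quot :: "fds \<Rightarrow> (nat \<times> nat) set \<Rightarrow> fds" where
  "fds_quot C R = (class_rep R ` fst C, \<lambda>x. class_rep R (snd C x))"

lemma hom_kernel_subset: "hom_kernel C h \<subseteq> fst C \<times> fst C"
  unfolding hom_kernel_def by auto

lemma hom_kernel_eq_Id_on_iff: "hom_kernel C h = Id_on (fst C) \<longleftrightarrow> inj_on h (fst C)"
  unfolding hom_kernel_def Id_on_def inj_on_def by auto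

lemma fds_congruence_hom_kernel:
  "is_fds C \<Longrightarrow> h \<in> fds_hom C X \<Longrightarrow> fds_congruence C (hom_kernel C h)"
  unfolding fds_congruence_def hom_kernel_def equiv_def refl_on_def sym_def trans_def
  using is_fdsD fds_homD(2) by fastforce

lemma fds_congruence_Inter:
  assumes "K \<noteq> {}" "\<And>R. R \<in> K \<Longrightarrow> fds_congruence C R"
  shows "fds_congruence C (\<Inter>K)"
proof -
  have equiv: "\<And>R. R \<in> K \<Longrightarrow> equiv (fst C) R"
    and compat: "\<And>R x y. R \<in> K \<Longrightarrow> (x, y) \<in> R \<Longrightarrow> (snd C x, snd C y) \<in> R"
    using assms(2) unfolding fds_congruence_def by auto
  have "\<Inter>K \<subseteq> fst C \<times> fst C"
    using assms(1) equiv_type[OF equiv] by blast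
  moreover have "refl_on (fst C) (\<Inter>K)"
    using equiv unfolding equiv_def refl_on_def by blast
  moreover have "sym (\<Inter>K)"
    using equiv unfolding equiv_def sym_def by blast
  moreover have "trans (\<Inter>K)"
    using equiv unfolding equiv_def trans_def by blast
  moreover have "\<forall>(x, y)\<in>\<Inter>K. (snd C x, snd C y) \<in> \<Inter>K"
    using compat by blast
  ultimately show ?thesis
    unfolding fds_congruence_def equiv_def by blast
qed

lemma fds_congruence_closure:
  assumes C: "is_fds C" and T: "T \<subseteq> fst C \<times> fst C"
  shows "fds_congruence C (congruence_closure C T)" "T \<subseteq> congruence_closure C T"
    "\<And>R. fds_congruence C R \<Longrightarrow> T \<subseteq> R \<Longrightarrow> congruence_closure C T \<subseteq> R"
proof -
  have "fds_congruence C (fst C \<times> fst C)"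
    using is_fdsD[OF C] unfolding fds_congruence_def equiv_def refl_on_def sym_def trans_def by auto
  then show "fds_congruence C (congruence_closure C T)"
    unfolding congruence_closure_def using T by (intro fds_congruence_Inter) auto
  show "T \<subseteq> congruence_closure C T" "\<And>R. fds_congruence C R \<Longrightarrow> T \<subseteq> R \<Longrightarrow> congruence_closure C T \<subseteq> R"
    unfolding congruence_closure_def by blast+
qed

lemma class_rep_mem:
  assumes E: "fds_congruence C E" and x: "x \<in> fst C"
  shows "(x, class_rep E x) \<in> E"
proof -
  have "(x, x) \<in> E"
    using E x unfolding fds_congruence_def equiv_def refl_on_def by blast
  then show ?thesis
    unfolding class_rep_def by (rule LeastI)
qed

lemma class_rep_in_carrier: "fds_congruence C E \<Longrightarrow> x \<in> fst C \<Longrightarrow> class_rep E x \<in> fst C"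
  using class_rep_mem unfolding fds_congruence_def equiv_def by blast

lemma class_rep_eq:
  assumes E: "fds_congruence C E" and xy: "(x, y) \<in> E"
  shows "class_rep E y = class_rep E x"
proof -
  have "equiv (fst C) E"
    using E unfolding fds_congruence_def by blast
  then show ?thesis
    using equiv_class_eq[OF _ xy] unfolding class_rep_def Image_singleton_iff[symmetric] by simp
qed

lemma is_fds_quot: "is_fds C \<Longrightarrow> fds_congruence C E \<Longrightarrow> is_fds (fds_quot C E)"
  unfolding fds_quot_def is_fds_def using class_rep_in_carrier by auto

lemma class_rep_snd:
  assumes E: "fds_congruence C E" and x: "x \<in> fst C"
  shows "class_rep E (snd C (class_rep E x)) = class_rep E (snd C x)"
proof -
  have "(snd C x, snd C (class_rep E x)) \<in> E"
    using E class_rep_mem[OF E x] unfolding fds_congruence_def by blast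
  then show ?thesis
    by (rule class_rep_eq[OF E])
qed

lemma fds_hom_from_quot:
  assumes C: "is_fds C" and E: "fds_congruence C E" and k: "k \<in> fds_hom (fds_quot C E) X"
  shows "restrict (k \<circ> class_rep E) (fst C) \<in> fds_hom C X"
    "E \<subseteq> hom_kernel C (restrict (k \<circ> class_rep E) (fst C))"
proof -
  have "k (class_rep E (snd C x)) = snd X (k (class_rep E x))" if "x \<in> fst C" for x
    using fds_homD(2)[OF k] that class_rep_snd[OF E that] unfolding fds_quot_def by force
  then show "restrict (k \<circ> class_rep E) (fst C) \<in> fds_hom C X"
    using fds_homD(1)[OF k] is_fdsD[OF C] unfolding fds_hom_def fds_quot_def by auto
  show "E \<subseteq> hom_kernel C (restrict (k \<circ> class_rep E) (fst C))"
    using E class_rep_eq[OF E] unfolding hom_kernel_def fds_congruence_def equiv_def by fastforce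
qed

lemma fds_hom_to_quot:
  assumes C: "is_fds C" and E: "fds_congruence C E" and h: "h \<in> fds_hom C X" "E \<subseteq> hom_kernel C h"
  shows "restrict h (class_rep E ` fst C) \<in> fds_hom (fds_quot C E) X"
proof -
  have h_rep: "h (class_rep E x) = h x" if "x \<in> fst C" for x
    using h(2) class_rep_mem[OF E that] unfolding hom_kernel_def by auto
  have "h (class_rep E (snd C r)) = snd X (h r)" if "r \<in> fst C" for r
    using h_rep[OF is_fdsD[OF C that]] fds_homD(2)[OF h(1) that] by simp
  moreover have "class_rep E (snd C r) \<in> class_rep E ` fst C" if "r \<in> fst C" for r
    using is_fdsD[OF C that] by (rule imageI)
  ultimately show ?thesis
    using fds_homD(1)[OF h(1)] class_rep_in_carrier[OF E] unfolding fds_hom_def fds_quot_def by auto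
qed

lemma card_fds_hom_quot:
  assumes C: "is_fds C" and E: "fds_congruence C E"
  shows "card (fds_hom (fds_quot C E) X) = card {h \<in> fds_hom C X. E \<subseteq> hom_kernel C h}"
proof -
  let ?F = "\<lambda>k. restrict (k \<circ> class_rep E) (fst C)"
  let ?G = "\<lambda>h. restrict h (class_rep E ` fst C)"
  have "bij_betw ?F (fds_hom (fds_quot C E) X) {h \<in> fds_hom C X. E \<subseteq> hom_kernel C h}"
  proof (rule bij_betw_byWitness[where f'="?G"])
    show "\<forall>k\<in>fds_hom (fds_quot C E) X. ?G (?F k) = k"
    proof
      fix k assume k: "k \<in> fds_hom (fds_quot C E) X"
      have "k \<in> extensional (class_rep E ` fst C)"
        using fds_homD(3)[OF k] unfolding fds_quot_def by simp
      then show "?G (?F k) = k"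
      proof (rule extensionalityI[OF restrict_extensional])
        fix r assume "r \<in> class_rep E ` fst C"
        then obtain x where x: "x \<in> fst C" "r = class_rep E x"
          by blast
        moreover have "class_rep E (class_rep E x) = class_rep E x"
          by (rule class_rep_eq[OF E class_rep_mem[OF E x(1)]])
        ultimately show "?G (?F k) r = k r"
          using class_rep_in_carrier[OF E x(1)] by simp
      qed
    qed
    show "\<forall>h\<in>{h \<in> fds_hom C X. E \<subseteq> hom_kernel C h}. ?F (?G h) = h"
    proof
      fix h assume h: "h \<in> {h \<in> fds_hom C X. E \<subseteq> hom_kernel C h}"
      then have "h \<in> extensional (fst C)"
        using fds_homD(3) by blast
      then show "?F (?G h) = h"
      proof (rule extensionalityI[OF restrict_extensional])
        fix x assume x: "x \<in> fst C"
        have "(x, class_rep E x) \<in> hom_kernel C h"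
          using h class_rep_mem[OF E x] by blast
        then have "h (class_rep E x) = h x"
          unfolding hom_kernel_def by simp
        then show "?F (?G h) x = h x"
          using x class_rep_in_carrier[OF E x] by simp
      qed
    qed
    show "?F ` fds_hom (fds_quot C E) X \<subseteq> {h \<in> fds_hom C X. E \<subseteq> hom_kernel C h}"
      by (rule image_subsetI) (simp add: fds_hom_from_quot[OF C E])
    show "?G ` {h \<in> fds_hom C X. E \<subseteq> hom_kernel C h} \<subseteq> fds_hom (fds_quot C E) X"
      by (rule image_subsetI) (simp add: fds_hom_to_quot[OF C E])
  qed
  then show ?thesis
    by (rule bij_betw_same_card)
qed

lemma card_fds_hom_identifying_eq_quot:
  assumes C: "is_fds C" and T: "T \<subseteq> fst C \<times> fst C"
  shows "card {h \<in> fds_hom C X. T \<subseteq> hom_kernel C h}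
    = card (fds_hom (fds_quot C (congruence_closure C T)) X)"
proof -
  let ?E = "congruence_closure C T"
  have "T \<subseteq> hom_kernel C h \<longleftrightarrow> ?E \<subseteq> hom_kernel C h" if "h \<in> fds_hom C X" for h
  proof
    assume "T \<subseteq> hom_kernel C h"
    then show "?E \<subseteq> hom_kernel C h"
      by (rule fds_congruence_closure(3)[OF C T fds_congruence_hom_kernel[OF C that]])
  next
    assume "?E \<subseteq> hom_kernel C h"
    with fds_congruence_closure(2)[OF C T] show "T \<subseteq> hom_kernel C h"
      by (rule subset_trans)
  qed
  then have "{h \<in> fds_hom C X. T \<subseteq> hom_kernel C h} = {h \<in> fds_hom C X. ?E \<subseteq> hom_kernel C h}"
    by blast
  then show ?thesis
    using card_fds_hom_quot[OF C fds_congruence_closure(1)[OF C T]] by simp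
qed

lemma card_superset_fibers:
  assumes "finite H" "finite U" "\<And>h. h \<in> H \<Longrightarrow> \<kappa> h \<subseteq> U"
  shows "card {h \<in> H. T \<subseteq> \<kappa> h} = (\<Sum>T'\<in>{T'. T \<subseteq> T' \<and> T' \<subseteq> U}. card {h \<in> H. \<kappa> h = T'})"
proof -
  have fibers: "{h \<in> H. T \<subseteq> \<kappa> h} = (\<Union>T'\<in>{T'. T \<subseteq> T' \<and> T' \<subseteq> U}. {h \<in> H. \<kappa> h = T'})"
    using assms(3) by auto
  have "finite {T'. T \<subseteq> T' \<and> T' \<subseteq> U}"
    using assms(2) by (rule finite_subset[rotated, OF iffD2[OF finite_Pow_iff]]) auto
  then show ?thesis
    unfolding fibers by (rule card_UN_disjoint) (use assms(1) in auto)
qed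

lemma superset_sum_inversion:
  fixes f g :: "'a set \<Rightarrow> 'b::cancel_comm_monoid_add"
  assumes U: "finite U"
    and sums: "\<And>T. T \<subseteq> U \<Longrightarrow> (\<Sum>T'\<in>{T'. T \<subseteq> T' \<and> T' \<subseteq> U}. f T') = (\<Sum>T'\<in>{T'. T \<subseteq> T' \<and> T' \<subseteq> U}. g T')"
  shows "T \<subseteq> U \<Longrightarrow> f T = g T"
proof (induction "card (U - T)" arbitrary: T rule: less_induct)
  case less
  let ?S = "{T'. T \<subseteq> T' \<and> T' \<subseteq> U}"
  have fin: "finite ?S"
    using U by (rule finite_subset[rotated, OF iffD2[OF finite_Pow_iff]]) auto
  have T: "T \<in> ?S"
    using less.prems by auto
  have "f T' = g T'" if "T' \<in> ?S - {T}" for T'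
  proof (rule less.hyps)
    have "U - T' \<subset> U - T"
      using that less.prems by auto
    then show "card (U - T') < card (U - T)"
      using U by (simp add: psubset_card_mono)
  qed (use that in auto)
  then have "(\<Sum>T'\<in>?S - {T}. f T') = (\<Sum>T'\<in>?S - {T}. g T')"
    by (rule sum.cong[OF refl])
  then show ?case
    using sums[OF less.prems] sum.remove[OF fin T, of f] sum.remove[OF fin T, of g] by simp
qed

lemma card_inj_fds_hom_eq:
  assumes A: "is_fds A" and B: "is_fds B"
    and hom_eq: "\<And>C. is_fds C \<Longrightarrow> card (fds_hom C A) = card (fds_hom C B)"
    and C: "is_fds C"
  shows "card {h \<in> fds_hom C A. inj_on h (fst C)} = card {h \<in> fds_hom C B. inj_on h (fst C)}"
proof -
  let ?U = "fst C \<times> fst C"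
  let ?N = "\<lambda>X T'. card {h \<in> fds_hom C X. hom_kernel C h = T'}"
  have U: "finite ?U"
    using C unfolding is_fds_def by auto
  have above: "card {h \<in> fds_hom C X. T \<subseteq> hom_kernel C h} = (\<Sum>T'\<in>{T'. T \<subseteq> T' \<and> T' \<subseteq> ?U}. ?N X T')"
    if "is_fds X" for X T
    using finite_fds_hom[OF C that] U hom_kernel_subset by (rule card_superset_fibers)
  have "card {h \<in> fds_hom C A. T \<subseteq> hom_kernel C h} = card {h \<in> fds_hom C B. T \<subseteq> hom_kernel C h}"
    if T: "T \<subseteq> ?U" for T
    using card_fds_hom_identifying_eq_quot[OF C T]
      hom_eq[OF is_fds_quot[OF C fds_congruence_closure(1)[OF C T]]] by simp
  then have "(\<Sum>T'\<in>{T'. T \<subseteq> T' \<and> T' \<subseteq> ?U}. ?N A T') = (\<Sum>T'\<in>{T'. T \<subseteq> T' \<and> T' \<subseteq> ?U}. ?N B T')"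
    if "T \<subseteq> ?U" for T
    using that above[OF A, of T] above[OF B, of T] by simp
  then have "?N A (Id_on (fst C)) = ?N B (Id_on (fst C))"
    by (rule superset_sum_inversion[OF U, where f = "?N A" and g = "?N B"]) (auto simp: Id_on_def)
  then show ?thesis
    by (simp add: hom_kernel_eq_Id_on_iff)
qed

lemma inj_fds_hom_exists:
  assumes A: "is_fds A" and B: "is_fds B"
    and hom_eq: "\<And>C. is_fds C \<Longrightarrow> card (fds_hom C A) = card (fds_hom C B)"
  shows "\<exists>h\<in>fds_hom A B. inj_on h (fst A)"
proof -
  have "restrict id (fst A) \<in> fds_hom A A"
    using is_fdsD[OF A] unfolding fds_hom_def by auto
  moreover have "inj_on (restrict id (fst A)) (fst A)"
    by (simp add: inj_on_def)
  ultimately have "restrict id (fst A) \<in> {h \<in> fds_hom A A. inj_on h (fst A)}"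
    by blast
  moreover have "finite {h \<in> fds_hom A A. inj_on h (fst A)}"
    using finite_fds_hom[OF A A] by (rule finite_subset[rotated]) blast
  ultimately have "0 < card {h \<in> fds_hom A A. inj_on h (fst A)}"
    by (intro card_gt_0_iff[THEN iffD2] conjI) blast+
  then have "{h \<in> fds_hom A B. inj_on h (fst A)} \<noteq> {}"
    using card_inj_fds_hom_eq[OF A B hom_eq A] by (metis card.empty less_irrefl)
  then show ?thesis
    by blast
qed

lemma fds_iso_if_card_fds_hom_eq:
  assumes A: "is_fds A" and B: "is_fds B"
    and hom_eq: "\<And>C. is_fds C \<Longrightarrow> card (fds_hom C A) = card (fds_hom C B)"
  shows "fds_iso A B"
proof -
  obtain h where h: "h \<in> fds_hom A B" "inj_on h (fst A)"
    using inj_fds_hom_exists[OF A B hom_eq] by blast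
  obtain g where g: "g \<in> fds_hom B A" "inj_on g (fst B)"
    using inj_fds_hom_exists[OF B A] hom_eq by metis
  have fin: "finite (fst A)" "finite (fst B)"
    using A B unfolding is_fds_def by auto
  have into: "h ` fst A \<subseteq> fst B" "g ` fst B \<subseteq> fst A"
    using fds_homD(1)[OF h(1)] fds_homD(1)[OF g(1)] by auto
  have "card (fst B) \<le> card (h ` fst A)"
    using card_inj_on_le[OF g(2) into(2) fin(1)] card_image[OF h(2)] by simp
  then have "h ` fst A = fst B"
    using card_seteq[OF fin(2) into(1)] by blast
  then have "bij_betw h (fst A) (fst B)"
    using h(2) unfolding bij_betw_def by blast
  then show ?thesis
    using fds_homD(2)[OF h(1)] unfolding fds_iso_def by blast
qed

theorem mainTheorem6:
  fixes as :: "fds list" and A B :: fds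
  assumes coeffs: "\<forall>a\<in>set as. is_fds a"
    and A: "is_fds A" and B: "is_fds B"
    and eq: "fds_iso (peval as A) (peval as B)"
    and cond: "(1 < length as \<and> has_fixpoint (as ! 1))
               \<or> (\<exists>i. 1 < i \<and> i < length as \<and> has_fixpoint (as ! i) \<and> has_fixpoint A)"
  shows "fds_iso A B"
proof -
  obtain k where k: "1 \<le> k" "k < length as" "has_fixpoint (as ! k)"
    using cond by (elim disjE exE conjE) (auto intro: that less_imp_le)
  have connected: "card (fds_hom C A) = card (fds_hom C B)" if "is_fds C" "fds_connected C" for C
    using card_fds_hom_eq_if_peval_iso[OF coeffs A B eq k that] .
  have "card (fds_hom C A) = card (fds_hom C B)" if "is_fds C" for C
    using card_fds_hom_eq_if_connected_eq[OF connected that] .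
  then show ?thesis
    by (rule fds_iso_if_card_fds_hom_eq[OF A B])
qed

end
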